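(* Let $A$ be a $d\times n$ integer matrix whose columns generate $\mathbb{Z}^d$ and such that $(1,\dots,1)$ lies in the $\mathbb{Q}$-row span of $A$. Then for every $\beta\in\mathbb{C}^d$, $M_A(\beta)$ endowed with its quotient $(F,V)$-bifiltration is nicely bifiltered.
   Context: $D=\mathbb{C}[x_1,\dots,x_n]\langle\partial_1,\dots,\partial_n\rangle$. $I_A\subset\mathbb{C}[\partial]$ is generated by $\partial^u-\partial^v$ with $Au=Av$; $H_A(\beta)=DI_A+\sum_iD(\sum_ja_{ij}x_j\partial_j-\beta_i)$; $M_A(\beta)=D/H_A(\beta)$. $F$-filtration: weights $0$ on $x$, $1$ on $\partial$. $V$-filtration along the origin: weights $-1$ on $x_i$, $1$ on $\partial_i$. $F_{d,k}(D)=F_d(D)\cap V_k(D)$, and $F_{d,k}(M_A(\beta))=(F_{d,k}(D)+H_A(\beta))/H_A(\beta)$. The bifiltration is nice if $(\bigcup_{d'}F_{d',k}(M))\cap(\bigcup_{k'}F_{d,k'}(M))=F_{d,k}(M)$ for all $d,k$. *)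

theory Defs
  imports "HOL-Analysis.Analysis" "HOL-Library.Poly_Mapping"
begin

text \<open>Weyl algebra D = C[x_1..x_n]<d_1..d_n>, elements in normally ordered form
  sum c_(a,b) x^a d^b, represented as finitely supported maps from exponent pairs
  (a,b) (a = exponent of x, b = exponent of d) to complex coefficients.\<close>

type_synonym mono = "(nat \<Rightarrow>\<^sub>0 nat) \<times> (nat \<Rightarrow>\<^sub>0 nat)"
type_synonym weyl = "mono \<Rightarrow>\<^sub>0 complex"

definition tdeg :: "(nat \<Rightarrow>\<^sub>0 nat) \<Rightarrow> nat" where
  "tdeg a = (\<Sum>i\<in>Poly_Mapping.keys a. Poly_Mapping.lookup a i)"

text \<open>Product of monomials: x^a d^b * x^c d^e =
  sum_{k <= b, k <= c} prod_i binom(b_i,k_i) * c_i!/(c_i-k_i)! * x^(a+c-k) d^(b-k+e).\<close>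
definition mono_mult :: "mono \<Rightarrow> mono \<Rightarrow> weyl" where
  "mono_mult m1 m2 = (case m1 of (a, b) \<Rightarrow> case m2 of (c, e) \<Rightarrow>
     (\<Sum>k\<in>{k. \<forall>i. Poly_Mapping.lookup k i \<le> Poly_Mapping.lookup b i \<and> Poly_Mapping.lookup k i \<le> Poly_Mapping.lookup c i}.
        Poly_Mapping.single (a + c - k, b - k + e)
          (of_nat (\<Prod>i\<in>Poly_Mapping.keys k. (Poly_Mapping.lookup b i choose Poly_Mapping.lookup k i) *
                     (fact (Poly_Mapping.lookup c i) div fact (Poly_Mapping.lookup c i - Poly_Mapping.lookup k i))))))"

definition wmult :: "weyl \<Rightarrow> weyl \<Rightarrow> weyl" where
  "wmult P Q = (\<Sum>m1\<in>Poly_Mapping.keys P. \<Sum>m2\<in>Poly_Mapping.keys Q.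
      Poly_Mapping.map (\<lambda>z. Poly_Mapping.lookup P m1 * Poly_Mapping.lookup Q m2 * z) (mono_mult m1 m2))"

definition wconst :: "complex \<Rightarrow> weyl" where
  "wconst c = Poly_Mapping.single (0, 0) c"

definition weyl_D :: "nat \<Rightarrow> weyl set" where
  "weyl_D n = {P. \<forall>(a, b)\<in>Poly_Mapping.keys P. Poly_Mapping.keys a \<subseteq> {..<n} \<and> Poly_Mapping.keys b \<subseteq> {..<n}}"

inductive_set left_ideal :: "nat \<Rightarrow> weyl set \<Rightarrow> weyl set" for n G where
  zero: "0 \<in> left_ideal n G"
| gen: "g \<in> G \<Longrightarrow> Q \<in> weyl_D n \<Longrightarrow> wmult Q g \<in> left_ideal n G"
| add: "P \<in> left_ideal n G \<Longrightarrow> R \<in> left_ideal n G \<Longrightarrow> P + R \<in> left_ideal n G"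

text \<open>A is a d x n integer matrix given by its entries A i j, i < d, j < n.\<close>
definition Amul :: "(nat \<Rightarrow> nat \<Rightarrow> int) \<Rightarrow> nat \<Rightarrow> (nat \<Rightarrow>\<^sub>0 nat) \<Rightarrow> nat \<Rightarrow> int" where
  "Amul A n u i = (\<Sum>j<n. A i j * int (Poly_Mapping.lookup u j))"

definition toric_gens :: "(nat \<Rightarrow> nat \<Rightarrow> int) \<Rightarrow> nat \<Rightarrow> nat \<Rightarrow> weyl set" where
  "toric_gens A d n = {Poly_Mapping.single (0, u) 1 - Poly_Mapping.single (0, v) 1 | u v.
      Poly_Mapping.keys u \<subseteq> {..<n} \<and> Poly_Mapping.keys v \<subseteq> {..<n} \<and> (\<forall>i<d. Amul A n u i = Amul A n v i)}"

definition euler_op :: "(nat \<Rightarrow> nat \<Rightarrow> int) \<Rightarrow> nat \<Rightarrow> complex \<Rightarrow> nat \<Rightarrow> weyl" where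
  "euler_op A n c i = (\<Sum>j<n. Poly_Mapping.single (Poly_Mapping.single j 1, Poly_Mapping.single j 1)
        (of_int (A i j))) - wconst c"

definition H_A :: "(nat \<Rightarrow> nat \<Rightarrow> int) \<Rightarrow> nat \<Rightarrow> nat \<Rightarrow> (nat \<Rightarrow> complex) \<Rightarrow> weyl set" where
  "H_A A d n \<beta> = left_ideal n (toric_gens A d n \<union> {euler_op A n (\<beta> i) i | i. i < d})"

definition FV :: "nat \<Rightarrow> int \<Rightarrow> int \<Rightarrow> weyl set" where
  "FV n p k = {P \<in> weyl_D n. \<forall>(a, b)\<in>Poly_Mapping.keys P.
       int (tdeg b) \<le> p \<and> int (tdeg b) - int (tdeg a) \<le> k}"

text \<open>Quotient map D -> D/H, classes represented as cosets.\<close>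
definition coset :: "weyl set \<Rightarrow> weyl \<Rightarrow> weyl set" where
  "coset H P = {P + h | h. h \<in> H}"

definition FV_M :: "(nat \<Rightarrow> nat \<Rightarrow> int) \<Rightarrow> nat \<Rightarrow> nat \<Rightarrow> (nat \<Rightarrow> complex) \<Rightarrow> int \<Rightarrow> int \<Rightarrow> weyl set set" where
  "FV_M A d n \<beta> p k = coset (H_A A d n \<beta>) ` FV n p k"

definition nicely_bifiltered :: "(int \<Rightarrow> int \<Rightarrow> 'm set) \<Rightarrow> bool" where
  "nicely_bifiltered F \<longleftrightarrow> (\<forall>p k. (\<Union>p'. F p' k) \<inter> (\<Union>k'. F p k') = F p k)"

end

theory Submission
  imports Defs
begin

(*
  The V-weight of a monomial x^a d^b is |b| - |a|; F_{p,k}(D) is spanned by the monomials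
  with |b| <= p and V-weight <= k.  The proof rests on the fact that H_A(beta) is
  V-homogeneous: the Euler operators have weight 0, and since (1,...,1) is a rational
  combination of the rows of A, Au = Av forces |u| = |v|, so d^u - d^v is homogeneous.
  As the V-weight is additive under multiplication of monomials, the truncation vtrunc k
  ("drop all monomials of V-weight > k") maps a left ideal with homogeneous generators into
  itself.  Now if a class has representatives P in F_{p',k} and R in F_{p,k'}, then
  vtrunc k R lies in F_{p,k} (truncation never raises the F-degree) and
  vtrunc k R - P = vtrunc k (R - P) lies in H, so the class lies in F_{p,k}(M_A(beta)).
*)

lemma tdeg_sum:
  assumes "finite S" "Poly_Mapping.keys a \<subseteq> S"
  shows "tdeg a = (\<Sum>i\<in>S. Poly_Mapping.lookup a i)"
  unfolding tdeg_def by (rule sum.mono_neutral_left) (use assms in \<open>auto simp: in_keys_iff\<close>)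

lemma tdeg_zero [simp]: "tdeg 0 = 0"
  by (simp add: tdeg_def)

lemma tdeg_single [simp]: "tdeg (Poly_Mapping.single i c) = c"
  by (simp add: tdeg_def)

lemma tdeg_add: "tdeg (a + b) = tdeg a + tdeg b"
proof -
  let ?S = "Poly_Mapping.keys a \<union> Poly_Mapping.keys b"
  have "tdeg (a + b) = (\<Sum>i\<in>?S. Poly_Mapping.lookup (a + b) i)"
    by (rule tdeg_sum) (auto dest: subsetD[OF keys_add])
  also have "\<dots> = (\<Sum>i\<in>?S. Poly_Mapping.lookup a i) + (\<Sum>i\<in>?S. Poly_Mapping.lookup b i)"
    by (simp add: lookup_add sum.distrib)
  also have "\<dots> = tdeg a + tdeg b"
    using tdeg_sum[of ?S a] tdeg_sum[of ?S b] by simp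
  finally show ?thesis .
qed

lemma tdeg_diff:
  assumes "\<forall>i. Poly_Mapping.lookup k i \<le> Poly_Mapping.lookup a i"
  shows "tdeg (a - k) + tdeg k = tdeg a"
proof -
  have "(a - k) + k = a"
    by (rule poly_mapping_eqI) (use assms in \<open>simp add: lookup_add lookup_minus\<close>)
  then show ?thesis by (metis tdeg_add)
qed

definition vweight :: "mono \<Rightarrow> int" where
  "vweight m = int (tdeg (snd m)) - int (tdeg (fst m))"

definition v_homogeneous :: "weyl \<Rightarrow> bool" where
  "v_homogeneous g \<longleftrightarrow> (\<exists>w. \<forall>m\<in>Poly_Mapping.keys g. vweight m = w)"

text \<open>The V-weight is additive: each monomial of x^a d^b * x^c d^e has weight
  vweight (a,b) + vweight (c,e), since the commutation terms lower |b| and |c| by the same |k|.\<close>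
lemma vweight_mono_mult:
  assumes "m \<in> Poly_Mapping.keys (mono_mult m1 m2)"
  shows "vweight m = vweight m1 + vweight m2"
proof -
  obtain a b c e where m12: "m1 = (a, b)" "m2 = (c, e)" by force
  from assms obtain k where
      k_le: "\<forall>i. Poly_Mapping.lookup k i \<le> Poly_Mapping.lookup b i \<and> Poly_Mapping.lookup k i \<le> Poly_Mapping.lookup c i"
    and m: "m = (a + c - k, b - k + e)"
    unfolding mono_mult_def m12 by (auto dest!: subsetD[OF keys_sum] split: if_splits)
  have "tdeg (a + c - k) + tdeg k = tdeg (a + c)"
    by (rule tdeg_diff) (use k_le in \<open>auto simp: lookup_add intro: trans_le_add2\<close>)
  moreover have "tdeg (b - k) + tdeg k = tdeg b"
    by (rule tdeg_diff) (use k_le in auto)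
  ultimately show ?thesis
    unfolding vweight_def m m12 by (simp add: tdeg_add)
qed

definition vtrunc :: "int \<Rightarrow> weyl \<Rightarrow> weyl" where
  "vtrunc k P = Abs_poly_mapping (\<lambda>m. if vweight m \<le> k then Poly_Mapping.lookup P m else 0)"

lemma lookup_vtrunc:
  "Poly_Mapping.lookup (vtrunc k P) m = (if vweight m \<le> k then Poly_Mapping.lookup P m else 0)"
proof -
  have "finite {m. (if vweight m \<le> k then Poly_Mapping.lookup P m else 0) \<noteq> 0}"
    by (rule finite_subset[of _ "{m. Poly_Mapping.lookup P m \<noteq> 0}"]) auto
  then show ?thesis unfolding vtrunc_def by simp
qed

lemma keys_vtrunc: "Poly_Mapping.keys (vtrunc k P) = {m \<in> Poly_Mapping.keys P. vweight m \<le> k}"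
  by (auto simp: in_keys_iff lookup_vtrunc split: if_splits)

lemma vtrunc_add: "vtrunc k (P + Q) = vtrunc k P + vtrunc k Q"
  by (rule poly_mapping_eqI) (simp add: lookup_vtrunc lookup_add)

lemma vtrunc_zero [simp]: "vtrunc k 0 = 0"
  by (rule poly_mapping_eqI) (simp add: lookup_vtrunc)

lemma vtrunc_sum: "vtrunc k (sum f A) = (\<Sum>x\<in>A. vtrunc k (f x))"
  by (induction A rule: infinite_finite_induct) (simp_all add: vtrunc_add)

lemma vtrunc_id: "\<forall>m\<in>Poly_Mapping.keys P. vweight m \<le> k \<Longrightarrow> vtrunc k P = P"
  by (rule poly_mapping_eqI) (auto simp: lookup_vtrunc in_keys_iff)

lemma vtrunc_homogeneous:
  "\<forall>m\<in>Poly_Mapping.keys P. vweight m = w \<Longrightarrow> vtrunc k P = (if w \<le> k then P else 0)"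
  by (rule poly_mapping_eqI) (auto simp: lookup_vtrunc in_keys_iff)

lemma lookup_pmap:
  "Poly_Mapping.lookup (Poly_Mapping.map f p) m =
     (if Poly_Mapping.lookup p m = 0 then 0 else f (Poly_Mapping.lookup p m))"
  by (simp add: Poly_Mapping.map.rep_eq when_def)

lemma keys_pmap: "Poly_Mapping.keys (Poly_Mapping.map f p) \<subseteq> Poly_Mapping.keys p"
  by (auto simp: in_keys_iff lookup_pmap split: if_splits)

text \<open>Multiplying on the right by a homogeneous element of weight w shifts weights by w,
  so truncating the product at k is the same as truncating the left factor at k - w.\<close>
lemma vtrunc_wmult:
  assumes g: "\<forall>m\<in>Poly_Mapping.keys g. vweight m = w"
  shows "vtrunc k (wmult Q g) = wmult (vtrunc (k - w) Q) g"
proof -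
  define summand where "summand m1 m2 = Poly_Mapping.map
      (\<lambda>z. Poly_Mapping.lookup Q m1 * Poly_Mapping.lookup g m2 * z) (mono_mult m1 m2)" for m1 m2
  have summand_trunc: "vtrunc k (summand m1 m2) = (if vweight m1 \<le> k - w then summand m1 m2 else 0)"
    if "m2 \<in> Poly_Mapping.keys g" for m1 m2
  proof -
    have "\<forall>m\<in>Poly_Mapping.keys (summand m1 m2). vweight m = vweight m1 + w"
      using keys_pmap vweight_mono_mult g that unfolding summand_def by fastforce
    from vtrunc_homogeneous[OF this] show ?thesis by auto
  qed
  have "vtrunc k (wmult Q g) = (\<Sum>m1\<in>Poly_Mapping.keys Q. \<Sum>m2\<in>Poly_Mapping.keys g. vtrunc k (summand m1 m2))"
    unfolding wmult_def vtrunc_sum summand_def ..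
  also have "\<dots> = (\<Sum>m1\<in>Poly_Mapping.keys Q.
                     if vweight m1 \<le> k - w then (\<Sum>m2\<in>Poly_Mapping.keys g. summand m1 m2) else 0)"
    by (intro sum.cong refl) (simp add: summand_trunc cong: sum.cong)
  also have "\<dots> = (\<Sum>m1\<in>{m1\<in>Poly_Mapping.keys Q. vweight m1 \<le> k - w}. \<Sum>m2\<in>Poly_Mapping.keys g. summand m1 m2)"
    by (rule sum.inter_filter[symmetric]) simp
  also have "\<dots> = wmult (vtrunc (k - w) Q) g"
    unfolding wmult_def keys_vtrunc summand_def by (rule sum.cong) (auto simp: lookup_vtrunc)
  finally show ?thesis .
qed

lemma wmult_uminus: "wmult (- Q) g = - wmult Q g"
  unfolding wmult_def keys_minus sum_negf[symmetric]
  by (intro sum.cong refl poly_mapping_eqI) (simp add: lookup_pmap lookup_sum sum_negf[symmetric])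

lemma left_ideal_uminus: "P \<in> left_ideal n G \<Longrightarrow> - P \<in> left_ideal n G"
proof (induction rule: left_ideal.induct)
  case zero
  then show ?case by (simp add: left_ideal.zero)
next
  case (gen g Q)
  have "- Q \<in> weyl_D n" using gen(2) by (simp add: weyl_D_def)
  then show ?case unfolding wmult_uminus[symmetric] by (rule left_ideal.gen[OF gen(1)])
next
  case (add P R)
  then show ?case using left_ideal.add[OF add.IH] by (simp add: add.commute)
qed

lemma left_ideal_vtrunc:
  assumes "\<forall>g\<in>G. v_homogeneous g" and "P \<in> left_ideal n G"
  shows "vtrunc k P \<in> left_ideal n G"
  using assms(2)
proof (induction arbitrary: k rule: left_ideal.induct)
  case zero
  then show ?case by (simp add: left_ideal.zero)
next
  case (gen g Q)
  then obtain w where w: "\<forall>m\<in>Poly_Mapping.keys g. vweight m = w"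
    using assms(1) unfolding v_homogeneous_def by blast
  have "vtrunc (k - w) Q \<in> weyl_D n"
    using gen(2) unfolding weyl_D_def by (fastforce simp: keys_vtrunc)
  then show ?case unfolding vtrunc_wmult[OF w] by (rule left_ideal.gen[OF gen(1)])
next
  case (add P R)
  then show ?case by (simp add: vtrunc_add left_ideal.add)
qed

lemma tdeg_eq_row_combination:
  fixes r :: "nat \<Rightarrow> rat"
  assumes r: "\<forall>j<n. (\<Sum>i<d. r i * of_int (A i j)) = 1"
    and u: "Poly_Mapping.keys u \<subseteq> {..<n}"
  shows "(of_nat (tdeg u) :: rat) = (\<Sum>i<d. r i * of_int (Amul A n u i))"
proof -
  have "(of_nat (tdeg u) :: rat) = (\<Sum>j<n. of_nat (Poly_Mapping.lookup u j) * (\<Sum>i<d. r i * of_int (A i j)))"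
    using r by (simp add: tdeg_sum[OF _ u])
  also have "\<dots> = (\<Sum>i<d. \<Sum>j<n. r i * (of_int (A i j) * of_nat (Poly_Mapping.lookup u j)))"
    by (subst sum.swap) (simp add: sum_distrib_left sum_distrib_right mult_ac)
  also have "\<dots> = (\<Sum>i<d. r i * of_int (Amul A n u i))"
    by (simp add: Amul_def sum_distrib_left)
  finally show ?thesis .
qed

text \<open>A toric generator d^u - d^v with Au = Av has |u| = |v|, hence is homogeneous.\<close>
lemma toric_gen_v_homogeneous:
  assumes homog: "\<exists>r :: nat \<Rightarrow> rat. \<forall>j<n. (\<Sum>i<d. r i * of_int (A i j)) = 1"
    and g: "g \<in> toric_gens A d n"
  shows "v_homogeneous g"
proof -
  obtain u v where g_eq: "g = Poly_Mapping.single (0, u) 1 - Poly_Mapping.single (0, v) 1"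
    and uv: "Poly_Mapping.keys u \<subseteq> {..<n}" "Poly_Mapping.keys v \<subseteq> {..<n}"
    and Auv: "\<forall>i<d. Amul A n u i = Amul A n v i"
    using g unfolding toric_gens_def by blast
  obtain r :: "nat \<Rightarrow> rat" where r: "\<forall>j<n. (\<Sum>i<d. r i * of_int (A i j)) = 1"
    using homog by blast
  have "(of_nat (tdeg u) :: rat) = of_nat (tdeg v)"
    using tdeg_eq_row_combination[OF r uv(1)] tdeg_eq_row_combination[OF r uv(2)] Auv by simp
  then have "tdeg u = tdeg v" by simp
  moreover have "Poly_Mapping.keys g \<subseteq> {(0, u), (0, v)}"
    unfolding g_eq using keys_diff by fastforce
  ultimately have "\<forall>m\<in>Poly_Mapping.keys g. vweight m = int (tdeg u)"
    by (auto simp: vweight_def)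
  then show ?thesis unfolding v_homogeneous_def by blast
qed

text \<open>Each Euler operator involves only the monomials x_j d_j and 1, all of V-weight 0.\<close>
lemma euler_op_v_homogeneous: "v_homogeneous (euler_op A n c i)"
proof -
  have "Poly_Mapping.keys (euler_op A n c i) \<subseteq>
          (\<Union>j<n. {(Poly_Mapping.single j 1, Poly_Mapping.single j 1)}) \<union> {(0, 0)}"
    unfolding euler_op_def wconst_def
    by (rule order.trans[OF keys_diff]) (auto dest!: subsetD[OF keys_sum] split: if_splits)
  then have "\<forall>m\<in>Poly_Mapping.keys (euler_op A n c i). vweight m = 0"
    by (auto simp: vweight_def)
  then show ?thesis unfolding v_homogeneous_def by blast
qed

lemma coset_eqI:
  assumes "P - R \<in> left_ideal n G"
  shows "coset (left_ideal n G) P = coset (left_ideal n G) R"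
proof -
  have "coset (left_ideal n G) P \<subseteq> coset (left_ideal n G) R"
    if "P - R \<in> left_ideal n G" for P R
  proof
    fix x assume "x \<in> coset (left_ideal n G) P"
    then obtain h where h: "h \<in> left_ideal n G" "x = P + h" unfolding coset_def by blast
    have "(P - R) + h \<in> left_ideal n G" using left_ideal.add[OF that h(1)] .
    moreover have "x = R + ((P - R) + h)" using h(2) by simp
    ultimately show "x \<in> coset (left_ideal n G) R" unfolding coset_def by blast
  qed
  moreover have "R - P \<in> left_ideal n G"
    using left_ideal_uminus[OF assms] by simp
  ultimately show ?thesis using assms by blast
qed

lemma coset_eqD:
  assumes "coset (left_ideal n G) P = coset (left_ideal n G) R"
  shows "R - P \<in> left_ideal n G"
proof -
  have "R \<in> coset (left_ideal n G) R" unfolding coset_def using left_ideal.zero by force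
  then obtain h where "h \<in> left_ideal n G" "R = P + h" using assms unfolding coset_def by blast
  then show ?thesis by simp
qed

lemma coset_vtrunc:
  assumes G: "\<forall>g\<in>G. v_homogeneous g"
    and P: "\<forall>m\<in>Poly_Mapping.keys P. vweight m \<le> k"
    and PR: "coset (left_ideal n G) P = coset (left_ideal n G) R"
  shows "coset (left_ideal n G) (vtrunc k R) = coset (left_ideal n G) P"
proof (rule coset_eqI)
  have "vtrunc k (R - P) \<in> left_ideal n G"
    by (rule left_ideal_vtrunc[OF G coset_eqD[OF PR]])
  then show "vtrunc k R - P \<in> left_ideal n G"
    using vtrunc_add[of k "R - P" P] vtrunc_id[OF P] by simp
qed

lemma vtrunc_FV: "R \<in> FV n p k' \<Longrightarrow> vtrunc k R \<in> FV n p k"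
  unfolding FV_def weyl_D_def by (fastforce simp: keys_vtrunc vweight_def)

theorem lemma9:
  fixes A :: "nat \<Rightarrow> nat \<Rightarrow> int" and d n :: nat and \<beta> :: "nat \<Rightarrow> complex"
  assumes gen: "\<forall>w :: nat \<Rightarrow> int. \<exists>c :: nat \<Rightarrow> int. \<forall>i<d. w i = (\<Sum>j<n. c j * A i j)"
    and homog: "\<exists>r :: nat \<Rightarrow> rat. \<forall>j<n. (\<Sum>i<d. r i * of_int (A i j)) = 1"
  shows "nicely_bifiltered (FV_M A d n \<beta>)"
  unfolding nicely_bifiltered_def
proof (intro allI equalityI subsetI)
  fix p k c
  let ?G = "toric_gens A d n \<union> {euler_op A n (\<beta> i) i | i. i < d}"
  have G: "\<forall>g\<in>?G. v_homogeneous g"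
    using toric_gen_v_homogeneous[OF homog] euler_op_v_homogeneous by blast
  assume "c \<in> (\<Union>p'. FV_M A d n \<beta> p' k) \<inter> (\<Union>k'. FV_M A d n \<beta> p k')"
  then obtain p' k' P R where P: "P \<in> FV n p' k" "c = coset (left_ideal n ?G) P"
    and R: "R \<in> FV n p k'" "c = coset (left_ideal n ?G) R"
    unfolding FV_M_def H_A_def by blast
  have "\<forall>m\<in>Poly_Mapping.keys P. vweight m \<le> k"
    using P(1) by (auto simp: FV_def vweight_def)
  then have "coset (left_ideal n ?G) (vtrunc k R) = c"
    using coset_vtrunc[OF G] P(2) R(2) by simp
  with vtrunc_FV[OF R(1)] show "c \<in> FV_M A d n \<beta> p k"
    unfolding FV_M_def H_A_def by blast
qed blast

end
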